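(* Let $G$ be a graph, $\mathcal U=\{U_1,\dots,U_m\}$ a partition of $V(G)$, and $\mathcal C$ a $\mathcal U$-connecting path system in $G$. Then there exists a $\mathcal U$-connecting path system $\mathcal C'$ in $G$ such that (a) $\mathcal C'$ contains no edge with both ends in the same $U_i$, and (b) for all $1\leq i<j\leq m$, $\mathcal C'$ contains at most $2$ edges with one end in $U_i$ and the other in $U_j$.
   Context: A path system in $G$ is a collection of vertex-disjoint (non-trivial) paths in $G$, also viewed as the subgraph formed by their union. Given a partition $\mathcal U$ of $V(G)$ and a path system $\mathcal P$, the reduced multigraph $R_{\mathcal U}(\mathcal P)$ has vertex set $\mathcal U$ and, for each path of $\mathcal P$ with endpoints in $U\in\mathcal U$ and $U'\in\mathcal U$, one edge between $U$ and $U'$ (a loop if $U=U'$; loops contribute 2 to the degree). $\mathcal P$ is $\mathcal U$-connecting if $R_{\mathcal U}(\mathcal P)$ is Eulerian, i.e. connected (on all of $\mathcal U$) with every vertex of even degree. *)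

theory Defs
  imports Main "HOL-Library.Disjoint_Sets"
begin

definition is_graph :: "'a set \<Rightarrow> ('a \<Rightarrow> 'a \<Rightarrow> bool) \<Rightarrow> bool" where
  "is_graph V E \<longleftrightarrow> finite V \<and>
     (\<forall>u v. E u v \<longrightarrow> u \<in> V \<and> v \<in> V \<and> u \<noteq> v \<and> E v u)"

definition is_path :: "('a \<Rightarrow> 'a \<Rightarrow> bool) \<Rightarrow> 'a list \<Rightarrow> bool" where
  "is_path E p \<longleftrightarrow> length p \<ge> 2 \<and> distinct p \<and>
     (\<forall>i. Suc i < length p \<longrightarrow> E (p ! i) (p ! Suc i))"

definition path_system :: "('a \<Rightarrow> 'a \<Rightarrow> bool) \<Rightarrow> 'a list set \<Rightarrow> bool" where
  "path_system E P \<longleftrightarrow> (\<forall>p\<in>P. is_path E p) \<and>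
     (\<forall>p\<in>P. \<forall>q\<in>P. p \<noteq> q \<longrightarrow> set p \<inter> set q = {})"

definition ps_edges :: "'a list set \<Rightarrow> 'a set set" where
  "ps_edges P = {{p ! i, p ! Suc i} | p i. p \<in> P \<and> Suc i < length p}"

definition red_adj :: "'a list set \<Rightarrow> 'a set \<Rightarrow> 'a set \<Rightarrow> bool" where
  "red_adj P U U' \<longleftrightarrow> (\<exists>p\<in>P. (hd p \<in> U \<and> last p \<in> U') \<or> (hd p \<in> U' \<and> last p \<in> U))"

text \<open>Degree of U in R_U(P): each path contributes the number of its endpoints in U
  (so a loop contributes 2).\<close>
definition red_degree :: "'a list set \<Rightarrow> 'a set \<Rightarrow> nat" where
  "red_degree P U = (\<Sum>p\<in>P. (if hd p \<in> U then 1 else 0) + (if last p \<in> U then 1 else 0))"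

definition reduced_eulerian :: "'a set set \<Rightarrow> 'a list set \<Rightarrow> bool" where
  "reduced_eulerian \<U> P \<longleftrightarrow>
     (\<forall>U\<in>\<U>. \<forall>U'\<in>\<U>. (\<lambda>A B. A \<in> \<U> \<and> B \<in> \<U> \<and> red_adj P A B)\<^sup>*\<^sup>* U U') \<and>
     (\<forall>U\<in>\<U>. even (red_degree P U))"

definition U_connecting :: "('a \<Rightarrow> 'a \<Rightarrow> bool) \<Rightarrow> 'a set set \<Rightarrow> 'a list set \<Rightarrow> bool" where
  "U_connecting E \<U> P \<longleftrightarrow> path_system E P \<and> reduced_eulerian \<U> P"

end

theory Submission
  imports Defs
begin

text \<open>Take a \<U>-connecting path system C with the fewest edges. If a path of C visited some part
  twice, cutting out the segment between the two visits would keep every degree of the reduced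
  multigraph even and keep it connected (a union of parts crossed by none of the new paths is
  crossed by no path of C), contradicting minimality. This gives (a), and also shows that each
  path contains at most one edge between two given parts U and W.
  Suppose three paths p1, p2, p3 contain U-W edges. Deleting two of these edges preserves
  all parities and lowers the number of edges, so it must disconnect the reduced multigraph:
  there is a union of parts Yk containing U but not W, crossed by no path of C other than the
  two shortened ones. Every pk then crosses exactly one of Y1 \<inter> Y2 \<inter> Y3 and
  Y1 \<union> Y2 \<union> Y3 and no other path crosses either, whereas by the handshake lemma
  every union of parts is crossed by an even number of paths.\<close>

definition end_count :: "'a set \<Rightarrow> 'a list \<Rightarrow> nat" where
  "end_count Z r = of_bool (hd r \<in> Z) + of_bool (last r \<in> Z)"

definition crosses :: "'a set \<Rightarrow> 'a list \<Rightarrow> bool" where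
  "crosses Y r \<longleftrightarrow> (hd r \<in> Y) \<noteq> (last r \<in> Y)"

definition saturated :: "'a set set \<Rightarrow> 'a set \<Rightarrow> bool" where
  "saturated \<U> Y \<longleftrightarrow> (\<forall>Z\<in>\<U>. Z \<subseteq> Y \<or> Z \<inter> Y = {})"

definition reduced_connected :: "'a set set \<Rightarrow> 'a list set \<Rightarrow> bool" where
  "reduced_connected \<U> P \<longleftrightarrow>
     (\<forall>U\<in>\<U>. \<forall>U'\<in>\<U>. (\<lambda>A B. A \<in> \<U> \<and> B \<in> \<U> \<and> red_adj P A B)\<^sup>*\<^sup>* U U')"

definition num_edges :: "'a list set \<Rightarrow> nat" where
  "num_edges P = (\<Sum>p\<in>P. length p - 1)"

lemma red_degree_eq_sum: "red_degree P Z = (\<Sum>r\<in>P. end_count Z r)"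
  unfolding red_degree_def end_count_def of_bool_def by simp

lemma reduced_eulerian_iff:
  "reduced_eulerian \<U> P \<longleftrightarrow> reduced_connected \<U> P \<and> (\<forall>U\<in>\<U>. even (red_degree P U))"
  unfolding reduced_eulerian_def reduced_connected_def by simp

lemma even_red_degree_iff:
  assumes "finite P"
  shows "even (red_degree P Y) \<longleftrightarrow> even (\<Sum>r\<in>P. of_bool (crosses Y r) :: nat)"
proof -
  have "red_degree P Y = (\<Sum>r\<in>P. of_bool (crosses Y r) + 2 * of_bool (hd r \<in> Y \<and> last r \<in> Y))"
    unfolding red_degree_eq_sum end_count_def crosses_def by (intro sum.cong) auto
  also have "\<dots> = (\<Sum>r\<in>P. of_bool (crosses Y r)) + 2 * (\<Sum>r\<in>P. of_bool (hd r \<in> Y \<and> last r \<in> Y))"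
    by (simp add: sum.distrib sum_distrib_left)
  finally show ?thesis by simp
qed

lemma set_path_subset:
  assumes "is_graph V E" "is_path E p"
  shows "set p \<subseteq> V"
proof
  fix v assume "v \<in> set p"
  then obtain k where k: "k < length p" "v = p ! k" by (auto simp: in_set_conv_nth)
  show "v \<in> V"
  proof (cases "Suc k < length p")
    case True
    then have "E (p ! k) (p ! Suc k)" using assms(2) unfolding is_path_def by blast
    then show ?thesis using assms(1) k unfolding is_graph_def by blast
  next
    case False
    with k assms(2) have "k = Suc (k - 1)" unfolding is_path_def by auto
    moreover have "E (p ! (k - 1)) (p ! Suc (k - 1))"
      using assms(2) k \<open>k = Suc (k - 1)\<close> unfolding is_path_def by metis
    ultimately show ?thesis using assms(1) k unfolding is_graph_def by metis
  qed
qed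

lemma path_ends_in_graph:
  assumes "is_graph V E" "path_system E P" "r \<in> P"
  shows "hd r \<in> V \<and> last r \<in> V"
proof -
  have "is_path E r" using assms unfolding path_system_def by blast
  moreover then have "r \<noteq> []" unfolding is_path_def by auto
  ultimately show ?thesis using set_path_subset[OF assms(1)] hd_in_set last_in_set by blast
qed

lemma finite_path_system:
  assumes "is_graph V E" "path_system E P"
  shows "finite P"
proof (rule inj_on_finite)
  show "inj_on hd P"
  proof
    fix p q assume pq: "p \<in> P" "q \<in> P" "hd p = hd q"
    have "p \<noteq> []" "q \<noteq> []" using pq assms(2) unfolding path_system_def is_path_def by auto
    then have "set p \<inter> set q \<noteq> {}" using pq(3) by (metis disjoint_iff hd_in_set)
    then show "p = q" using pq assms(2) unfolding path_system_def by blast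
  qed
  show "hd ` P \<subseteq> V" using path_ends_in_graph[OF assms] by blast
  show "finite V" using assms(1) unfolding is_graph_def by simp
qed

lemma path_system_distinct: "path_system E P \<Longrightarrow> p \<in> P \<Longrightarrow> distinct p"
  unfolding path_system_def is_path_def by blast

lemma partition_on_part_unique:
  assumes "partition_on V \<U>" "Z \<in> \<U>" "Z' \<in> \<U>" "v \<in> Z" "v \<in> Z'"
  shows "Z = Z'"
  using disjointD[OF partition_onD2[OF assms(1)] assms(2,3)] assms(4,5) by blast

lemma saturated_mem_iff:
  assumes "saturated \<U> Y" "Z \<in> \<U>" "v \<in> Z"
  shows "v \<in> Y \<longleftrightarrow> Z \<subseteq> Y"
  using assms unfolding saturated_def by blast

lemma saturated_Int: "saturated \<U> A \<Longrightarrow> saturated \<U> B \<Longrightarrow> saturated \<U> (A \<inter> B)"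
  unfolding saturated_def by blast

lemma saturated_Un: "saturated \<U> A \<Longrightarrow> saturated \<U> B \<Longrightarrow> saturated \<U> (A \<union> B)"
  unfolding saturated_def by blast

lemma saturated_Compl: "saturated \<U> A \<Longrightarrow> saturated \<U> (- A)"
  unfolding saturated_def by blast

lemma even_crossings:
  assumes partition: "partition_on V \<U>" and "finite V" "finite P"
    and ends: "\<And>r. r \<in> P \<Longrightarrow> hd r \<in> V \<and> last r \<in> V"
    and even_degree: "\<forall>Z\<in>\<U>. even (red_degree P Z)" and Y: "saturated \<U> Y"
  shows "even (\<Sum>r\<in>P. of_bool (crosses Y r) :: nat)"
proof -
  define A where "A = {Z\<in>\<U>. Z \<subseteq> Y}"
  have "finite \<U>" using finite_elements[OF \<open>finite V\<close> partition] .
  then have "finite A" unfolding A_def by simp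
  have parts_containing: "(\<Sum>Z\<in>A. of_bool (v \<in> Z)) = (of_bool (v \<in> Y) :: nat)" if "v \<in> V" for v
  proof -
    obtain Z0 where Z0: "Z0 \<in> \<U>" "v \<in> Z0" using partition \<open>v \<in> V\<close> partition_onD1 by blast
    have only_Z0: "Z = Z0 \<and> v \<in> Y" if "Z \<in> A" "v \<in> Z" for Z
      using partition_on_part_unique[OF partition _ Z0(1) that(2) Z0(2)] that
      unfolding A_def by blast
    have "Z0 \<in> A" if "v \<in> Y" using saturated_mem_iff[OF Y Z0] that Z0(1) unfolding A_def by simp
    then have "A \<inter> {Z. v \<in> Z} = (if v \<in> Y then {Z0} else {})"
      using Z0(2) by (auto dest: only_Z0)
    then show ?thesis using \<open>finite A\<close> by simp
  qed
  have "(\<Sum>Z\<in>A. red_degree P Z) = red_degree P Y"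
    unfolding red_degree_eq_sum
    by (subst sum.swap) (simp add: end_count_def sum.distrib ends parts_containing)
  moreover have "even (\<Sum>Z\<in>A. red_degree P Z)"
    using even_degree unfolding A_def by (auto intro: dvd_sum)
  ultimately show ?thesis using even_red_degree_iff[OF \<open>finite P\<close>] by simp
qed

lemma reduced_connected_saturated:
  assumes connected: "reduced_connected \<U> P" and Y: "saturated \<U> Y"
    and uncrossed: "\<forall>r\<in>P. \<not> crosses Y r"
    and Z: "Z \<in> \<U>" "Z \<subseteq> Y" and Z': "Z' \<in> \<U>"
  shows "Z' \<subseteq> Y"
proof -
  let ?R = "\<lambda>A B. A \<in> \<U> \<and> B \<in> \<U> \<and> red_adj P A B"
  have "?R\<^sup>*\<^sup>* Z Z'" using connected Z Z' unfolding reduced_connected_def by blast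
  then show ?thesis
  proof (induction rule: rtranclp_induct)
    case base
    show ?case using Z(2) .
  next
    case (step A B)
    then obtain r where "r \<in> P" "hd r \<in> A \<and> last r \<in> B \<or> hd r \<in> B \<and> last r \<in> A"
      unfolding red_adj_def by blast
    with step.IH uncrossed have "B \<inter> Y \<noteq> {}" unfolding crosses_def by blast
    then show ?case using Y step.hyps(2) unfolding saturated_def by blast
  qed
qed

lemma reduced_connectedI:
  assumes partition: "partition_on V \<U>" and ends: "\<And>r. r \<in> P \<Longrightarrow> hd r \<in> V \<and> last r \<in> V"
    and cuts: "\<And>Y Z Z'. saturated \<U> Y \<Longrightarrow> \<forall>r\<in>P. \<not> crosses Y r \<Longrightarrow>
                 Z \<in> \<U> \<Longrightarrow> Z \<subseteq> Y \<Longrightarrow> Z' \<in> \<U> \<Longrightarrow> Z' \<subseteq> Y"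
  shows "reduced_connected \<U> P"
  unfolding reduced_connected_def
proof (intro ballI)
  let ?R = "\<lambda>A B. A \<in> \<U> \<and> B \<in> \<U> \<and> red_adj P A B"
  fix Z Z' assume Z: "Z \<in> \<U>" and Z': "Z' \<in> \<U>"
  define Y where "Y = \<Union>{B\<in>\<U>. ?R\<^sup>*\<^sup>* Z B}"
  have part_of: "v \<in> Y \<longleftrightarrow> ?R\<^sup>*\<^sup>* Z B" if "B \<in> \<U>" "v \<in> B" for v B
    using partition_on_part_unique[OF partition _ that(1) _ that(2)] that unfolding Y_def by blast
  have Y: "saturated \<U> Y"
    unfolding saturated_def using part_of by blast
  have "\<not> crosses Y r" if r: "r \<in> P" for r
  proof -
    obtain A B where A: "A \<in> \<U>" "hd r \<in> A" and B: "B \<in> \<U>" "last r \<in> B"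
      using ends[OF r] partition_onD1[OF partition] by blast
    then have "?R A B" "?R B A" using r unfolding red_adj_def by blast+
    then have "?R\<^sup>*\<^sup>* Z A \<longleftrightarrow> ?R\<^sup>*\<^sup>* Z B"
      using rtranclp.rtrancl_into_rtrancl[of ?R Z A B] rtranclp.rtrancl_into_rtrancl[of ?R Z B A]
      by blast
    then show ?thesis unfolding crosses_def using part_of A B by blast
  qed
  moreover have "Z \<subseteq> Y" unfolding Y_def using Z by blast
  ultimately have "Z' \<subseteq> Y" using cuts[OF Y _ Z _ Z'] by blast
  moreover obtain v where "v \<in> Z'" using partition_onD3[OF partition] Z' by (metis ex_in_conv)
  ultimately show "?R\<^sup>*\<^sup>* Z Z'" using part_of[OF Z'] by blast
qed

text \<open>The pieces of p left after deleting its edges between positions i and j; a piece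
  consisting of a single vertex is not a path and is dropped.\<close>
definition excise :: "'a list \<Rightarrow> nat \<Rightarrow> nat \<Rightarrow> 'a list set" where
  "excise p i j = {q \<in> {take (Suc i) p, drop j p}. 2 \<le> length q}"

lemma is_path_take:
  assumes "is_path E p" "2 \<le> length (take n p)"
  shows "is_path E (take n p)"
  using assms unfolding is_path_def by auto

lemma is_path_drop:
  assumes "is_path E p" "2 \<le> length (drop n p)"
  shows "is_path E (drop n p)"
  using assms unfolding is_path_def by (auto simp: add.commute[of n])

context
  fixes p :: "'a list" and i j :: nat
  assumes ij: "i < j" "j < length p" and distinct: "distinct p"
begin

lemma excise_pieces:
  "hd (take (Suc i) p) = hd p" "last (take (Suc i) p) = p ! i"
  "hd (drop j p) = p ! j" "last (drop j p) = last p"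
  "take (Suc i) p \<noteq> drop j p"
proof -
  show hd_take: "hd (take (Suc i) p) = hd p" and hd_drop: "hd (drop j p) = p ! j"
    and "last (drop j p) = last p"
    using ij by (auto simp: hd_drop_conv_nth)
  show "last (take (Suc i) p) = p ! i" using ij by (simp add: take_Suc_conv_app_nth)
  have "p \<noteq> []" using ij by auto
  then have "hd p \<noteq> p ! j"
    using distinct ij nth_eq_iff_index_eq[of p 0 j] by (simp add: hd_conv_nth)
  then show "take (Suc i) p \<noteq> drop j p" using hd_take hd_drop by metis
qed

lemma sum_excise:
  assumes "\<And>q. length q = 1 \<Longrightarrow> f q = 0"
  shows "sum f (excise p i j) = f (take (Suc i) p) + f (drop j p)"
proof -
  have "sum f (excise p i j) = sum f {take (Suc i) p, drop j p}"
  proof (rule sum.mono_neutral_left)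
    show "\<forall>q\<in>{take (Suc i) p, drop j p} - excise p i j. f q = 0"
    proof
      fix q assume "q \<in> {take (Suc i) p, drop j p} - excise p i j"
      then have "length q = 1" using ij unfolding excise_def by auto
      then show "f q = 0" by (rule assms)
    qed
  qed (auto simp: excise_def)
  then show ?thesis using excise_pieces(5) by simp
qed

lemma uncrossed_excise:
  "(\<forall>r\<in>excise p i j. \<not> crosses Y r) \<longleftrightarrow> (hd p \<in> Y \<longleftrightarrow> p ! i \<in> Y) \<and> (p ! j \<in> Y \<longleftrightarrow> last p \<in> Y)"
proof -
  have "\<not> crosses Y q" if "q \<in> {take (Suc i) p, drop j p}" "\<not> 2 \<le> length q" for q
  proof -
    have "length q = 1" using that ij by auto
    then show ?thesis unfolding crosses_def by (cases q) auto
  qed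
  then have "(\<forall>r\<in>excise p i j. \<not> crosses Y r) \<longleftrightarrow>
      \<not> crosses Y (take (Suc i) p) \<and> \<not> crosses Y (drop j p)"
    unfolding excise_def by blast
  then show ?thesis unfolding crosses_def excise_pieces by blast
qed

end

context
  fixes E P and p :: "'a list" and i j :: nat
  assumes system: "path_system E P" and p: "p \<in> P" and ij: "i < j" "j < length p"
begin

lemma excise_disjoint: "excise p i j \<inter> P = {}"
proof (rule ccontr)
  assume "excise p i j \<inter> P \<noteq> {}"
  then obtain q where q: "q \<in> excise p i j" "q \<in> P" by blast
  have "length q < length p" using q(1) ij unfolding excise_def by auto
  then have "set q \<inter> set p = {}" using q(2) p system unfolding path_system_def by (metis less_irrefl)
  moreover have "set q \<subseteq> set p"
    using q(1) unfolding excise_def by (auto dest: in_set_takeD in_set_dropD)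
  moreover have "q \<noteq> []" using q(1) unfolding excise_def by auto
  ultimately show False by (simp add: Int_absorb2)
qed

lemma path_system_excise: "path_system E (P - {p} \<union> excise p i j)"
proof -
  have "is_path E p" using system p unfolding path_system_def by blast
  then have paths: "\<forall>q\<in>excise p i j. is_path E q"
    using is_path_take is_path_drop unfolding excise_def by blast
  have inside: "\<forall>q\<in>excise p i j. set q \<subseteq> set p"
    unfolding excise_def by (auto dest: in_set_takeD in_set_dropD)
  have "set (take (Suc i) p) \<inter> set (drop j p) = {}"
    using set_take_disj_set_drop_if_distinct[OF path_system_distinct[OF system p]] ij by (simp add: Suc_leI)
  then have apart: "\<forall>q\<in>excise p i j. \<forall>q'\<in>excise p i j. q \<noteq> q' \<longrightarrow> set q \<inter> set q' = {}"
    unfolding excise_def by auto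
  show ?thesis
    unfolding path_system_def
  proof (intro conjI ballI impI)
    fix q assume "q \<in> P - {p} \<union> excise p i j"
    then show "is_path E q" using system paths unfolding path_system_def by blast
  next
    fix q q' assume q: "q \<in> P - {p} \<union> excise p i j" and q': "q' \<in> P - {p} \<union> excise p i j"
      and "q \<noteq> q'"
    have "\<forall>r\<in>P. \<forall>r'\<in>P. r \<noteq> r' \<longrightarrow> set r \<inter> set r' = {}"
      using system unfolding path_system_def by blast
    then show "set q \<inter> set q' = {}" using q q' \<open>q \<noteq> q'\<close> p inside apart by blast
  qed
qed

lemma num_edges_excise:
  assumes "finite P"
  shows "num_edges (P - {p} \<union> excise p i j) + (j - i) = num_edges P"
proof -
  have "num_edges (P - {p} \<union> excise p i j) = num_edges (P - {p}) + num_edges (excise p i j)"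
    unfolding num_edges_def using assms excise_disjoint
    by (intro sum.union_disjoint) (auto simp: excise_def)
  moreover have "num_edges (excise p i j) = i + (length p - 1 - j)"
    unfolding num_edges_def using ij by (subst sum_excise[OF ij path_system_distinct[OF system p]]) auto
  moreover have "num_edges P = num_edges (P - {p}) + (length p - 1)"
    unfolding num_edges_def using assms p by (simp add: sum.remove)
  ultimately show ?thesis using ij by simp
qed

lemma even_red_degree_excise:
  assumes "finite P"
  shows "even (red_degree (P - {p} \<union> excise p i j) Z) \<longleftrightarrow>
         even (red_degree P Z + of_bool (p ! i \<in> Z) + of_bool (p ! j \<in> Z))"
proof -
  let ?c = "\<lambda>r. of_bool (crosses Z r) :: nat"
  have short: "?c q = 0" if "length q = 1" for q
    using that unfolding crosses_def by (cases q) auto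
  have "sum ?c (P - {p} \<union> excise p i j) = sum ?c (P - {p}) + sum ?c (excise p i j)"
    using assms excise_disjoint by (intro sum.union_disjoint) (auto simp: excise_def)
  also have "sum ?c (excise p i j) = ?c (take (Suc i) p) + ?c (drop j p)"
    using sum_excise[OF ij path_system_distinct[OF system p]] short .
  finally have "even (sum ?c (P - {p} \<union> excise p i j)) \<longleftrightarrow>
      even (sum ?c (P - {p}) + ?c p + of_bool (p ! i \<in> Z) + of_bool (p ! j \<in> Z))"
    unfolding crosses_def excise_pieces[OF ij path_system_distinct[OF system p]] by auto
  moreover have "sum ?c P = sum ?c (P - {p}) + ?c p"
    unfolding sum.remove[OF assms p] by (rule add.commute)
  moreover have "finite (P - {p} \<union> excise p i j)" using assms by (simp add: excise_def)
  ultimately show ?thesis using assms by (simp add: even_red_degree_iff)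
qed

end

definition edge_between :: "'a set \<Rightarrow> 'a set \<Rightarrow> 'a list \<Rightarrow> nat \<Rightarrow> bool" where
  "edge_between U W p s \<longleftrightarrow> Suc s < length p \<and>
     (p ! s \<in> U \<and> p ! Suc s \<in> W \<or> p ! s \<in> W \<and> p ! Suc s \<in> U)"

lemma edge_between_parts_count:
  assumes partition: "partition_on V \<U>" and "U \<in> \<U>" "W \<in> \<U>" "Z \<in> \<U>"
    and "edge_between U W p s"
  shows "of_bool (p ! s \<in> Z) + of_bool (p ! Suc s \<in> Z) = of_bool (Z = U) + (of_bool (Z = W) :: nat)"
proof -
  have mem: "v \<in> Z \<longleftrightarrow> Z = X" if "X \<in> \<U>" "v \<in> X" for v X
    using partition_on_part_unique[OF partition \<open>Z \<in> \<U>\<close> that(1) _ that(2)] that(2) by blast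
  from \<open>edge_between U W p s\<close> consider "p ! s \<in> U" "p ! Suc s \<in> W" | "p ! s \<in> W" "p ! Suc s \<in> U"
    unfolding edge_between_def by blast
  then show ?thesis
    by cases (simp_all add: mem[OF \<open>U \<in> \<U>\<close>] mem[OF \<open>W \<in> \<U>\<close>])
qed

lemma edge_between_side:
  assumes "edge_between U W p s" "U \<subseteq> Y" "W \<inter> Y = {}"
  shows "p ! s \<in> Y \<longleftrightarrow> p ! s \<in> U" "p ! Suc s \<in> Y \<longleftrightarrow> p ! s \<notin> U"
  using assms unfolding edge_between_def by blast+

lemma excise_edges_between:
  assumes graph: "is_graph V E" and partition: "partition_on V \<U>" and system: "path_system E P"
    and p: "p \<in> P" and q: "q \<in> P" "q \<noteq> p" and UW: "U \<in> \<U>" "W \<in> \<U>"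
    and edges: "edge_between U W p s" "edge_between U W q t"
    and even_degree: "\<forall>Z\<in>\<U>. even (red_degree P Z)"
  obtains P' where "path_system E P'" "num_edges P' < num_edges P" "\<forall>Z\<in>\<U>. even (red_degree P' Z)"
    "\<And>Y. \<forall>r\<in>P'. \<not> crosses Y r \<Longrightarrow> (\<forall>r\<in>P - {p, q}. \<not> crosses Y r) \<and>
      (hd p \<in> Y \<longleftrightarrow> p ! s \<in> Y) \<and> (p ! Suc s \<in> Y \<longleftrightarrow> last p \<in> Y) \<and>
      (hd q \<in> Y \<longleftrightarrow> q ! t \<in> Y) \<and> (q ! Suc t \<in> Y \<longleftrightarrow> last q \<in> Y)"
proof -
  have s: "s < Suc s" "Suc s < length p" and t: "t < Suc t" "Suc t < length q"
    using edges unfolding edge_between_def by auto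
  have finite: "finite P" using finite_path_system[OF graph system] .
  define P1 where "P1 = P - {p} \<union> excise p s (Suc s)"
  define P2 where "P2 = P1 - {q} \<union> excise q t (Suc t)"
  have system1: "path_system E P1" unfolding P1_def using path_system_excise[OF system p s] .
  have q1: "q \<in> P1" unfolding P1_def using q by blast
  have finite1: "finite P1" using finite_path_system[OF graph system1] .
  show ?thesis
  proof (rule that)
    show "path_system E P2" unfolding P2_def using path_system_excise[OF system1 q1 t] .
    show "num_edges P2 < num_edges P"
      using num_edges_excise[OF system p s finite] num_edges_excise[OF system1 q1 t finite1]
      unfolding P1_def P2_def by linarith
    show "\<forall>Z\<in>\<U>. even (red_degree P2 Z)"
    proof
      fix Z assume Z: "Z \<in> \<U>"
      have "even (red_degree P1 Z) \<longleftrightarrow>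
          even (red_degree P Z + of_bool (p ! s \<in> Z) + of_bool (p ! Suc s \<in> Z))"
        unfolding P1_def by (rule even_red_degree_excise[OF system p s finite])
      moreover have "even (red_degree P2 Z) \<longleftrightarrow>
          even (red_degree P1 Z + of_bool (q ! t \<in> Z) + of_bool (q ! Suc t \<in> Z))"
        unfolding P2_def by (rule even_red_degree_excise[OF system1 q1 t finite1])
      ultimately have "even (red_degree P2 Z) \<longleftrightarrow> even (red_degree P Z
          + (of_bool (p ! s \<in> Z) + of_bool (p ! Suc s \<in> Z))
          + (of_bool (q ! t \<in> Z) + of_bool (q ! Suc t \<in> Z)))"
        by presburger
      then show "even (red_degree P2 Z)"
        unfolding edge_between_parts_count[OF partition UW Z edges(1)]
          edge_between_parts_count[OF partition UW Z edges(2)]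
        using bspec[OF even_degree Z] by presburger
    qed
    fix Y assume uncrossed: "\<forall>r\<in>P2. \<not> crosses Y r"
    have "q \<notin> excise p s (Suc s)" using excise_disjoint[OF system p s] q by blast
    then have "P - {p, q} \<subseteq> P2" "excise p s (Suc s) \<subseteq> P2" "excise q t (Suc t) \<subseteq> P2"
      unfolding P1_def P2_def by blast+
    then show "(\<forall>r\<in>P - {p, q}. \<not> crosses Y r) \<and>
      (hd p \<in> Y \<longleftrightarrow> p ! s \<in> Y) \<and> (p ! Suc s \<in> Y \<longleftrightarrow> last p \<in> Y) \<and>
      (hd q \<in> Y \<longleftrightarrow> q ! t \<in> Y) \<and> (q ! Suc t \<in> Y \<longleftrightarrow> last q \<in> Y)"
      using uncrossed uncrossed_excise[OF s path_system_distinct[OF system p], of Y]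
        uncrossed_excise[OF t path_system_distinct[OF system q(1)], of Y] by blast
  qed
qed

lemma crosses_Int_iff_not_crosses_Un:
  assumes "\<not> crosses A r" "hd r \<in> B \<longleftrightarrow> a" "last r \<in> B \<longleftrightarrow> \<not> a" "hd r \<in> D \<longleftrightarrow> a" "last r \<in> D \<longleftrightarrow> \<not> a"
  shows "crosses (A \<inter> B \<inter> D) r \<longleftrightarrow> \<not> crosses (A \<union> B \<union> D) r"
  using assms unfolding crosses_def by blast

locale minimal_connecting =
  fixes V :: "'a set" and E :: "'a \<Rightarrow> 'a \<Rightarrow> bool" and \<U> :: "'a set set" and C :: "'a list set"
  assumes graph: "is_graph V E" and partition: "partition_on V \<U>"
    and connecting: "U_connecting E \<U> C"
    and minimal: "\<And>P. U_connecting E \<U> P \<Longrightarrow> num_edges C \<le> num_edges P"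
begin

lemma system: "path_system E C"
  using connecting unfolding U_connecting_def by simp

lemma finite_C: "finite C"
  using finite_path_system[OF graph system] .

lemma connected: "reduced_connected \<U> C"
  using connecting unfolding U_connecting_def reduced_eulerian_iff by simp

lemma even_degree: "\<forall>Z\<in>\<U>. even (red_degree C Z)"
  using connecting unfolding U_connecting_def reduced_eulerian_iff by simp

lemma fewer_edges_uncrossed_cut:
  assumes "path_system E P" "num_edges P < num_edges C" "\<forall>Z\<in>\<U>. even (red_degree P Z)"
  obtains Y Z Z' where "saturated \<U> Y" "\<forall>r\<in>P. \<not> crosses Y r"
    "Z \<in> \<U>" "Z \<subseteq> Y" "Z' \<in> \<U>" "\<not> Z' \<subseteq> Y"
proof -
  have "\<not> reduced_connected \<U> P"
    using assms minimal[of P] unfolding U_connecting_def reduced_eulerian_iff by fastforce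
  then show ?thesis
    using reduced_connectedI[OF partition path_ends_in_graph[OF graph assms(1)]] that by blast
qed

lemma part_visited_once:
  assumes p: "p \<in> C" and "i < length p" "j < length p" and Z: "Z \<in> \<U>" "p ! i \<in> Z" "p ! j \<in> Z"
  shows "i = j"
proof -
  have False if ij: "i' < j'" "j' < length p" and Z': "p ! i' \<in> Z" "p ! j' \<in> Z" for i' j'
  proof -
    define P where "P = C - {p} \<union> excise p i' j'"
    have "path_system E P"
      unfolding P_def using path_system_excise[OF system p ij] .
    moreover have "num_edges P < num_edges C"
      unfolding P_def using num_edges_excise[OF system p ij finite_C] ij by linarith
    moreover have "\<forall>W\<in>\<U>. even (red_degree P W)"
    proof
      fix W assume "W \<in> \<U>"
      then have "p ! i' \<in> W \<longleftrightarrow> p ! j' \<in> W"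
        using partition_on_part_unique[OF partition _ Z(1)] Z' by metis
      then show "even (red_degree P W)"
        unfolding P_def even_red_degree_excise[OF system p ij finite_C]
        using even_degree \<open>W \<in> \<U>\<close> by simp
    qed
    ultimately obtain Y W W' where Y: "saturated \<U> Y" "\<forall>r\<in>P. \<not> crosses Y r"
      and W: "W \<in> \<U>" "W \<subseteq> Y" "W' \<in> \<U>" "\<not> W' \<subseteq> Y"
      by (rule fewer_edges_uncrossed_cut)
    have "p ! i' \<in> Y \<longleftrightarrow> p ! j' \<in> Y"
      using saturated_mem_iff[OF Y(1) Z(1)] Z' by blast
    then have "\<forall>r\<in>C. \<not> crosses Y r"
      using Y(2) uncrossed_excise[OF ij path_system_distinct[OF system p], of Y]
      unfolding P_def crosses_def by blast
    then show False using reduced_connected_saturated[OF connected Y(1) _ W(1,2,3)] W(4) by blast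
  qed
  then show "i = j" using assms by (metis linorder_neqE_nat)
qed

lemma double_excision_cut:
  assumes p: "p \<in> C" and q: "q \<in> C" "q \<noteq> p" and UW: "U \<in> \<U>" "W \<in> \<U>"
    and edges: "edge_between U W p s" "edge_between U W q t"
  obtains Y Z Z' where "saturated \<U> Y" "Z \<in> \<U>" "Z \<subseteq> Y" "Z' \<in> \<U>" "\<not> Z' \<subseteq> Y"
    "\<forall>r\<in>C - {p, q}. \<not> crosses Y r"
    "hd p \<in> Y \<longleftrightarrow> p ! s \<in> Y" "p ! Suc s \<in> Y \<longleftrightarrow> last p \<in> Y"
    "hd q \<in> Y \<longleftrightarrow> q ! t \<in> Y" "q ! Suc t \<in> Y \<longleftrightarrow> last q \<in> Y"
proof -
  obtain P where P: "path_system E P" "num_edges P < num_edges C" "\<forall>Z\<in>\<U>. even (red_degree P Z)"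
    and uncrossed: "\<And>Y. \<forall>r\<in>P. \<not> crosses Y r \<Longrightarrow> (\<forall>r\<in>C - {p, q}. \<not> crosses Y r) \<and>
      (hd p \<in> Y \<longleftrightarrow> p ! s \<in> Y) \<and> (p ! Suc s \<in> Y \<longleftrightarrow> last p \<in> Y) \<and>
      (hd q \<in> Y \<longleftrightarrow> q ! t \<in> Y) \<and> (q ! Suc t \<in> Y \<longleftrightarrow> last q \<in> Y)"
    using excise_edges_between[OF graph partition system p q UW edges even_degree] by blast
  obtain Y Z Z' where "saturated \<U> Y" "\<forall>r\<in>P. \<not> crosses Y r" "Z \<in> \<U>" "Z \<subseteq> Y" "Z' \<in> \<U>" "\<not> Z' \<subseteq> Y"
    using fewer_edges_uncrossed_cut[OF P] by blast
  then show ?thesis using that uncrossed by blast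
qed

lemma separating_cut:
  assumes "p \<in> C" "q \<in> C" "q \<noteq> p" "U \<in> \<U>" "W \<in> \<U>"
    and edges: "edge_between U W p s" "edge_between U W q t"
  obtains Y where "saturated \<U> Y" "\<forall>r\<in>C - {p, q}. \<not> crosses Y r"
    "hd p \<in> Y \<longleftrightarrow> p ! s \<in> U" "last p \<in> Y \<longleftrightarrow> p ! s \<notin> U"
    "hd q \<in> Y \<longleftrightarrow> q ! t \<in> U" "last q \<in> Y \<longleftrightarrow> q ! t \<notin> U"
proof -
  obtain Y Z Z' where Y: "saturated \<U> Y" and Z: "Z \<in> \<U>" "Z \<subseteq> Y" "Z' \<in> \<U>" "\<not> Z' \<subseteq> Y"
    and rest: "\<forall>r\<in>C - {p, q}. \<not> crosses Y r"
    and ends: "hd p \<in> Y \<longleftrightarrow> p ! s \<in> Y" "p ! Suc s \<in> Y \<longleftrightarrow> last p \<in> Y"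
      "hd q \<in> Y \<longleftrightarrow> q ! t \<in> Y" "q ! Suc t \<in> Y \<longleftrightarrow> last q \<in> Y"
    using double_excision_cut[OF assms] by blast
  have sides: "U \<subseteq> Y \<longleftrightarrow> \<not> W \<subseteq> Y"
  proof (rule ccontr)
    assume "\<not> (U \<subseteq> Y \<longleftrightarrow> \<not> W \<subseteq> Y)"
    then have "v \<in> Y \<longleftrightarrow> U \<subseteq> Y" if "v \<in> U \<union> W" for v
      using that saturated_mem_iff[OF Y assms(4)] saturated_mem_iff[OF Y assms(5)] by blast
    moreover have "p ! s \<in> U \<union> W" "p ! Suc s \<in> U \<union> W" "q ! t \<in> U \<union> W" "q ! Suc t \<in> U \<union> W"
      using edges unfolding edge_between_def by blast+
    ultimately have "\<forall>r\<in>C. \<not> crosses Y r" using rest ends unfolding crosses_def by blast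
    then show False using reduced_connected_saturated[OF connected Y _ Z(1,2,3)] Z(4) by blast
  qed
  define Y' where "Y' = (if U \<subseteq> Y then Y else - Y)"
  have in_Y': "v \<in> Y' \<longleftrightarrow> (v \<in> Y \<longleftrightarrow> U \<subseteq> Y)" for v
    unfolding Y'_def by simp
  have "U \<subseteq> Y'" "W \<inter> Y' = {}"
    using sides Y assms(4,5) unfolding Y'_def saturated_def by auto
  note sides' = edge_between_side[OF edges(1) this] edge_between_side[OF edges(2) this]
  show ?thesis
  proof (rule that)
    show "saturated \<U> Y'" using Y saturated_Compl[OF Y] unfolding Y'_def by simp
    show "\<forall>r\<in>C - {p, q}. \<not> crosses Y' r" using rest unfolding crosses_def in_Y' by simp
    show "hd p \<in> Y' \<longleftrightarrow> p ! s \<in> U" "last p \<in> Y' \<longleftrightarrow> p ! s \<notin> U"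
      "hd q \<in> Y' \<longleftrightarrow> q ! t \<in> U" "last q \<in> Y' \<longleftrightarrow> q ! t \<notin> U"
      using ends sides' unfolding in_Y' by simp_all
  qed
qed

lemma no_three_paths_between:
  assumes UW: "U \<in> \<U>" "W \<in> \<U>" and paths: "p1 \<in> C" "p2 \<in> C" "p3 \<in> C"
    and distinct: "p1 \<noteq> p2" "p1 \<noteq> p3" "p2 \<noteq> p3"
    and edges: "edge_between U W p1 s1" "edge_between U W p2 s2" "edge_between U W p3 s3"
  shows False
proof -
  obtain Y1 where Y1: "saturated \<U> Y1" "\<forall>r\<in>C - {p2, p3}. \<not> crosses Y1 r"
    "hd p2 \<in> Y1 \<longleftrightarrow> p2 ! s2 \<in> U" "last p2 \<in> Y1 \<longleftrightarrow> p2 ! s2 \<notin> U"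
    "hd p3 \<in> Y1 \<longleftrightarrow> p3 ! s3 \<in> U" "last p3 \<in> Y1 \<longleftrightarrow> p3 ! s3 \<notin> U"
    using separating_cut[OF paths(2,3) distinct(3)[symmetric] UW edges(2,3)] by blast
  obtain Y2 where Y2: "saturated \<U> Y2" "\<forall>r\<in>C - {p1, p3}. \<not> crosses Y2 r"
    "hd p1 \<in> Y2 \<longleftrightarrow> p1 ! s1 \<in> U" "last p1 \<in> Y2 \<longleftrightarrow> p1 ! s1 \<notin> U"
    "hd p3 \<in> Y2 \<longleftrightarrow> p3 ! s3 \<in> U" "last p3 \<in> Y2 \<longleftrightarrow> p3 ! s3 \<notin> U"
    using separating_cut[OF paths(1,3) distinct(2)[symmetric] UW edges(1,3)] by blast
  obtain Y3 where Y3: "saturated \<U> Y3" "\<forall>r\<in>C - {p1, p2}. \<not> crosses Y3 r"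
    "hd p1 \<in> Y3 \<longleftrightarrow> p1 ! s1 \<in> U" "last p1 \<in> Y3 \<longleftrightarrow> p1 ! s1 \<notin> U"
    "hd p2 \<in> Y3 \<longleftrightarrow> p2 ! s2 \<in> U" "last p2 \<in> Y3 \<longleftrightarrow> p2 ! s2 \<notin> U"
    using separating_cut[OF paths(1,2) distinct(1)[symmetric] UW edges(1,2)] by blast
  define I where "I = Y1 \<inter> Y2 \<inter> Y3"
  define J where "J = Y1 \<union> Y2 \<union> Y3"
  let ?c = "\<lambda>r. of_bool (crosses I r) + of_bool (crosses J r) :: nat"
  have "saturated \<U> I" "saturated \<U> J"
    using Y1(1) Y2(1) Y3(1) unfolding I_def J_def by (simp_all add: saturated_Int saturated_Un)
  then have "even (\<Sum>r\<in>C. of_bool (crosses I r) :: nat)" "even (\<Sum>r\<in>C. of_bool (crosses J r) :: nat)"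
    using even_crossings[OF partition _ finite_C path_ends_in_graph[OF graph system] even_degree]
      graph unfolding is_graph_def by simp_all
  then have "even (sum ?c C)" by (simp add: sum.distrib)
  moreover have "?c p1 = 1" "?c p2 = 1" "?c p3 = 1"
  proof -
    have "\<not> crosses Y1 p1" "\<not> crosses Y2 p2" "\<not> crosses Y3 p3"
      using Y1(2) Y2(2) Y3(2) paths distinct by blast+
    then have "crosses (Y1 \<inter> Y2 \<inter> Y3) p1 \<longleftrightarrow> \<not> crosses (Y1 \<union> Y2 \<union> Y3) p1"
      and "crosses (Y2 \<inter> Y1 \<inter> Y3) p2 \<longleftrightarrow> \<not> crosses (Y2 \<union> Y1 \<union> Y3) p2"
      and "crosses (Y3 \<inter> Y1 \<inter> Y2) p3 \<longleftrightarrow> \<not> crosses (Y3 \<union> Y1 \<union> Y2) p3"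
      using Y1(3-6) Y2(3-6) Y3(3-6) by (simp_all add: crosses_Int_iff_not_crosses_Un)
    then show "?c p1 = 1" "?c p2 = 1" "?c p3 = 1"
      unfolding I_def J_def by (auto simp: Int_ac Un_ac)
  qed
  moreover have "sum ?c C = sum ?c {p1, p2, p3}"
  proof (rule sum.mono_neutral_right[OF finite_C])
    show "\<forall>r\<in>C - {p1, p2, p3}. ?c r = 0"
      using Y1(2) Y2(2) Y3(2) unfolding I_def J_def crosses_def by auto
  qed (use paths in auto)
  ultimately show False using distinct by simp
qed

lemma no_edge_within_part:
  assumes "e \<in> ps_edges C" "Z \<in> \<U>"
  shows "\<not> e \<subseteq> Z"
proof
  assume "e \<subseteq> Z"
  from assms(1) obtain p i where "p \<in> C" "Suc i < length p" "e = {p ! i, p ! Suc i}"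
    unfolding ps_edges_def by blast
  then show False using part_visited_once[of p i "Suc i" Z] \<open>e \<subseteq> Z\<close> assms(2) by auto
qed

lemma edge_between_unique:
  assumes p: "p \<in> C" and UW: "U \<in> \<U>" "W \<in> \<U>"
    and edges: "edge_between U W p s" "edge_between U W p t"
  shows "s = t"
proof -
  have once: "i = j" if "X \<in> {U, W}" "i < length p" "j < length p" "p ! i \<in> X" "p ! j \<in> X" for X i j
    using part_visited_once[OF p that(2,3) _ that(4,5)] that(1) UW by blast
  have len: "s < length p" "Suc s < length p" "t < length p" "Suc t < length p"
    using edges unfolding edge_between_def by auto
  from edges consider "p ! s \<in> U" "p ! t \<in> U" | "p ! s \<in> W" "p ! t \<in> W"
    | "p ! s \<in> U" "p ! Suc s \<in> W" "p ! t \<in> W" "p ! Suc t \<in> U"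
    | "p ! s \<in> W" "p ! Suc s \<in> U" "p ! t \<in> U" "p ! Suc t \<in> W"
    unfolding edge_between_def by blast
  then show ?thesis
  proof cases
    case 1
    then show ?thesis using once[of U s t] len by simp
  next
    case 2
    then show ?thesis using once[of W s t] len by simp
  next
    case 3
    then have "s = Suc t" "Suc s = t" using once[of U s "Suc t"] once[of W "Suc s" t] len by simp_all
    then show ?thesis by simp
  next
    case 4
    then have "s = Suc t" "Suc s = t" using once[of W s "Suc t"] once[of U "Suc s" t] len by simp_all
    then show ?thesis by simp
  qed
qed

lemma card_edges_between:
  assumes UW: "U \<in> \<U>" "W \<in> \<U>" "U \<noteq> W"
  shows "card {e \<in> ps_edges C. e \<inter> U \<noteq> {} \<and> e \<inter> W \<noteq> {}} \<le> 2"
proof -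
  define Q where "Q = {p \<in> C. \<exists>s. edge_between U W p s}"
  define edge_of where "edge_of p = {p ! (SOME s. edge_between U W p s), p ! Suc (SOME s. edge_between U W p s)}"
    for p
  have "{e \<in> ps_edges C. e \<inter> U \<noteq> {} \<and> e \<inter> W \<noteq> {}} \<subseteq> edge_of ` Q"
  proof
    fix e assume e: "e \<in> {e \<in> ps_edges C. e \<inter> U \<noteq> {} \<and> e \<inter> W \<noteq> {}}"
    then obtain p i where p: "p \<in> C" "Suc i < length p" "e = {p ! i, p ! Suc i}"
      unfolding ps_edges_def by blast
    have "U \<inter> W = {}" using disjointD[OF partition_onD2[OF partition] UW] .
    then have "edge_between U W p i" using e p unfolding edge_between_def by blast
    moreover from this have "(SOME s. edge_between U W p s) = i"
      using edge_between_unique[OF p(1) UW(1,2)] by (metis someI)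
    ultimately show "e \<in> edge_of ` Q" unfolding Q_def edge_of_def using p by blast
  qed
  moreover have "finite Q" unfolding Q_def using finite_C by simp
  ultimately have "card {e \<in> ps_edges C. e \<inter> U \<noteq> {} \<and> e \<inter> W \<noteq> {}} \<le> card Q"
    by (meson card_image_le card_mono finite_imageI order_trans)
  moreover have "card Q \<le> 2"
  proof (rule ccontr)
    assume "\<not> card Q \<le> 2"
    then obtain T where "T \<subseteq> Q" "card T = 3" using obtain_subset_with_card_n[of 3 Q] by force
    then obtain p1 p2 p3 where "p1 \<in> Q" "p2 \<in> Q" "p3 \<in> Q" "p1 \<noteq> p2" "p1 \<noteq> p3" "p2 \<noteq> p3"
      unfolding card_3_iff by blast
    then show False unfolding Q_def using no_three_paths_between[OF UW(1,2)] by blast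
  qed
  ultimately show ?thesis by simp
qed

end

theorem mainTheorem13:
  fixes V :: "'a set" and E :: "'a \<Rightarrow> 'a \<Rightarrow> bool"
    and \<U> :: "'a set set" and \<C> :: "'a list set"
  assumes "is_graph V E"
    and "partition_on V \<U>"
    and "U_connecting E \<U> \<C>"
  shows "\<exists>\<C>'. U_connecting E \<U> \<C>' \<and>
           (\<forall>e\<in>ps_edges \<C>'. \<forall>U\<in>\<U>. \<not> e \<subseteq> U) \<and>
           (\<forall>U\<in>\<U>. \<forall>W\<in>\<U>. U \<noteq> W \<longrightarrow>
              card {e \<in> ps_edges \<C>'. e \<inter> U \<noteq> {} \<and> e \<inter> W \<noteq> {}} \<le> 2)"
proof -
  obtain C where "U_connecting E \<U> C" and "\<And>P. U_connecting E \<U> P \<Longrightarrow> num_edges C \<le> num_edges P"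
    using ex_has_least_nat[of "U_connecting E \<U>" \<C> num_edges] assms(3) by blast
  then interpret minimal_connecting V E \<U> C
    using assms(1,2) by unfold_locales
  show ?thesis using connecting no_edge_within_part card_edges_between by blast
qed

end
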